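(* Let $A$ be an abelian group, $a\in A$ and $\varphi$ an endomorphism of $A$. If $\varphi$ is inertial or left-inertial, then the torsion subgroup of $\mathbb{Z}[\varphi]a$ is finite.
   Context: Abelian groups are written additively. An endomorphism $\varphi$ of $A$ is inertial if $(\varphi(X)+X)/X$ is finite for every subgroup $X\le A$, and left-inertial if $X/(X\cap\varphi(X))$ is finite for every $X\le A$. $\mathbb{Z}[\varphi]a$ is the smallest $\varphi$-invariant subgroup of $A$ containing $a$. *)

theory Defs
  imports Main
begin

definition is_subgroup :: "'a::ab_group_add set \<Rightarrow> bool" where
  "is_subgroup X \<longleftrightarrow> 0 \<in> X \<and> (\<forall>x\<in>X. \<forall>y\<in>X. x + y \<in> X) \<and> (\<forall>x\<in>X. - x \<in> X)"

definition is_endo :: "('a::ab_group_add \<Rightarrow> 'a) \<Rightarrow> bool" where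
  "is_endo f \<longleftrightarrow> (\<forall>x y. f (x + y) = f x + f y)"

definition sum_set :: "'a::ab_group_add set \<Rightarrow> 'a set \<Rightarrow> 'a set" where
  "sum_set Y Z = {y + z | y z. y \<in> Y \<and> z \<in> Z}"

definition finite_quot :: "'a::ab_group_add set \<Rightarrow> 'a set \<Rightarrow> bool" where
  "finite_quot Y X \<longleftrightarrow> finite ((\<lambda>y. (\<lambda>x. y + x) ` X) ` Y)"

definition inertial :: "('a::ab_group_add \<Rightarrow> 'a) \<Rightarrow> bool" where
  "inertial f \<longleftrightarrow> (\<forall>X. is_subgroup X \<longrightarrow> finite_quot (sum_set (f ` X) X) X)"

definition left_inertial :: "('a::ab_group_add \<Rightarrow> 'a) \<Rightarrow> bool" where
  "left_inertial f \<longleftrightarrow> (\<forall>X. is_subgroup X \<longrightarrow> finite_quot X (X \<inter> f ` X))"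

definition Zphi :: "('a::ab_group_add \<Rightarrow> 'a) \<Rightarrow> 'a \<Rightarrow> 'a set" where
  "Zphi f a = \<Inter>{S. is_subgroup S \<and> f ` S \<subseteq> S \<and> a \<in> S}"

definition torsion_part :: "'a::ab_group_add set \<Rightarrow> 'a set" where
  "torsion_part B = {x \<in> B. \<exists>n::nat. n \<ge> 1 \<and> (\<Sum>i<n. x) = 0}"

end

theory Submission
  imports Defs "HOL-Computational_Algebra.Polynomial" "HOL-Computational_Algebra.Primes"
    "HOL-Library.FuncSet"
begin

text \<open>\<open>\<int>[f]a\<close> is the image of \<open>\<int>[x]\<close> under \<open>q \<mapsto> q(f) a\<close>. The polynomials sending \<open>a\<close> to a
  torsion element form an ideal of \<open>\<int>[x]\<close> that is saturated with respect to nonzero integers, hence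
  principal, say generated by \<open>g\<close>; so the torsion of \<open>\<int>[f]a\<close> lies in \<open>\<int>[f]t\<close> for the torsion
  element \<open>t = g(f) a\<close>.

  For \<open>n t = 0\<close> the group \<open>\<int>[f]t\<close> is finite, by induction on \<open>n\<close>. Applying (left) inertia to the
  subgroup generated by the even iterates \<open>f\<^sup>2\<^sup>j t\<close> and using pigeonhole on cosets yields a relation
  \<open>Q(f) t = 0\<close> with some coefficient \<open>1\<close>. For a prime \<open>p\<close> dividing \<open>n\<close>, let \<open>M\<close> be the last index
  with \<open>coeff Q M\<close> prime to \<open>p\<close>; then \<open>\<int>[f]t = \<langle>t, \<dots>, f\<^sup>M\<^sup>-\<^sup>1 t\<rangle> + \<int>[f](p t)\<close>, where the second
  summand is finite by induction and the first is an image of \<open>(\<int>/n)\<^sup>M\<close>.\<close>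

subsection \<open>Integer multiples\<close>

primrec nscale :: "nat \<Rightarrow> 'a::ab_group_add \<Rightarrow> 'a" where
  "nscale 0 x = 0"
| "nscale (Suc n) x = x + nscale n x"

lemma nscale_eq_sum: "nscale n x = (\<Sum>i<n. x)"
  by (induction n) (auto simp: add.commute)

lemma nscale_add_left: "nscale (m + n) x = nscale m x + nscale n x"
  by (induction m) (auto simp: add.assoc)

lemma nscale_diff_left: "m \<le> n \<Longrightarrow> nscale (n - m) x = nscale n x - nscale m x"
  using nscale_add_left[of "n - m" m x] by simp

lemma nscale_add_right: "nscale n (x + y) = nscale n x + nscale n y"
  by (induction n) (auto simp: algebra_simps)

lemma nscale_minus_right: "nscale n (- x) = - nscale n x"
  by (induction n) (auto simp: algebra_simps)

lemma nscale_zero_right [simp]: "nscale n 0 = 0"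
  by (induction n) auto

definition zscale :: "int \<Rightarrow> 'a::ab_group_add \<Rightarrow> 'a" where
  "zscale k x = (if 0 \<le> k then nscale (nat k) x else - nscale (nat (- k)) x)"

lemma zscale_of_nat: "zscale (int n) x = nscale n x"
  by (simp add: zscale_def)

lemma zscale_zero_left [simp]: "zscale 0 x = 0"
  by (simp add: zscale_def)

lemma zscale_one [simp]: "zscale 1 x = x"
  by (simp add: zscale_def)

lemma zscale_zero_right [simp]: "zscale k 0 = 0"
  by (simp add: zscale_def)

lemma zscale_add_right: "zscale k (x + y) = zscale k x + zscale k y"
  by (simp add: zscale_def nscale_add_right algebra_simps)

lemma zscale_minus_right: "zscale k (- x) = - zscale k x"
  by (simp add: zscale_def nscale_minus_right)

lemma zscale_diff_right: "zscale k (x - y) = zscale k x - zscale k y"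
  using zscale_add_right[of k x "- y"] zscale_minus_right[of k y] by simp

lemma zscale_minus_left: "zscale (- k) x = - zscale k x"
  by (cases "k = 0") (auto simp: zscale_def)

lemma zscale_add_left: "zscale (k + l) x = zscale k x + zscale l x"
proof -
  have nat_diff: "zscale (int m - int n) x = nscale m x - nscale n x" for m n
  proof (cases "n \<le> m")
    case True
    then have "int m - int n = int (m - n)" by simp
    then show ?thesis using True by (simp only: zscale_of_nat nscale_diff_left)
  next
    case False
    then have "int m - int n = - int (n - m)" by simp
    then have "zscale (int m - int n) x = - nscale (n - m) x"
      by (simp only: zscale_minus_left zscale_of_nat)
    then show ?thesis using False by (simp add: nscale_diff_left)
  qed
  obtain k1 k2 where k: "k = int k1 - int k2" by (metis int_diff_cases)
  obtain l1 l2 where l: "l = int l1 - int l2" by (metis int_diff_cases)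
  have "k + l = int (k1 + l1) - int (k2 + l2)" using k l by simp
  then have "zscale (k + l) x = nscale (k1 + l1) x - nscale (k2 + l2) x"
    by (simp only: nat_diff)
  then show ?thesis
    unfolding k l nat_diff nscale_add_left by (simp add: algebra_simps)
qed

lemma zscale_mult: "zscale (k * l) x = zscale k (zscale l x)"
proof -
  have "zscale (int m * l) x = zscale (int m) (zscale l x)" for m
    by (induction m) (auto simp: zscale_add_left distrib_right zscale_of_nat)
  moreover have "k = int (nat k) \<or> k = - int (nat (- k))" by auto
  ultimately show ?thesis
    by (metis minus_mult_left zscale_minus_left)
qed

lemma zscale_commute: "zscale k (zscale l x) = zscale l (zscale k x)"
  by (metis mult.commute zscale_mult)

lemma zscale_sum_right: "zscale k (sum g A) = (\<Sum>i\<in>A. zscale k (g i))"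
  by (induction A rule: infinite_finite_induct) (auto simp: zscale_add_right)

lemma zscale_mod:
  assumes "zscale n x = 0"
  shows "zscale (k mod n) x = zscale k x"
proof -
  have "zscale k x = zscale (k div n * n) x + zscale (k mod n) x"
    by (metis div_mult_mod_eq zscale_add_left)
  then show ?thesis by (simp add: zscale_mult assms)
qed

definition is_torsion :: "'a::ab_group_add \<Rightarrow> bool" where
  "is_torsion x \<longleftrightarrow> (\<exists>m. m \<noteq> 0 \<and> zscale m x = 0)"

lemma is_torsion_nat:
  assumes "is_torsion x"
  obtains n :: nat where "n > 0" "zscale (int n) x = 0"
proof -
  obtain m where "m \<noteq> 0" "zscale m x = 0" using assms by (auto simp: is_torsion_def)
  then have "zscale (int (nat \<bar>m\<bar>)) x = 0"
    by (cases "m \<ge> 0") (auto simp: zscale_minus_left)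
  with \<open>m \<noteq> 0\<close> show ?thesis using that[of "nat \<bar>m\<bar>"] by simp
qed
lemma torsion_part_eq: "torsion_part B = {x \<in> B. is_torsion x}"
proof -
  have "is_torsion x \<longleftrightarrow> (\<exists>n::nat. n \<ge> 1 \<and> (\<Sum>i<n. x) = 0)" for x :: 'a
  proof
    assume "is_torsion x"
    then obtain n :: nat where "n > 0" "zscale (int n) x = 0" by (rule is_torsion_nat)
    then show "\<exists>n::nat. n \<ge> 1 \<and> (\<Sum>i<n. x) = 0"
      by (intro exI[of _ n]) (simp add: zscale_of_nat nscale_eq_sum)
  next
    assume "\<exists>n::nat. n \<ge> 1 \<and> (\<Sum>i<n. x) = 0"
    then obtain n :: nat where "n \<ge> 1" "(\<Sum>i<n. x) = 0" by blast
    then show "is_torsion x"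
      unfolding is_torsion_def by (intro exI[of _ "int n"]) (simp add: zscale_of_nat nscale_eq_sum)
  qed
  then show ?thesis by (simp add: torsion_part_def)
qed

lemma is_torsion_0 [simp]: "is_torsion 0"
  unfolding is_torsion_def by (intro exI[of _ 1]) simp

lemma is_torsion_diff:
  assumes "is_torsion x" "is_torsion y"
  shows "is_torsion (x - y)"
proof -
  obtain m m' where "m \<noteq> 0" "zscale m x = 0" "m' \<noteq> 0" "zscale m' y = 0"
    using assms by (auto simp: is_torsion_def)
  then have "zscale (m * m') (x - y) = 0" "m * m' \<noteq> 0"
    by (simp_all add: zscale_diff_right zscale_mult, subst zscale_commute, simp)
  then show ?thesis
    unfolding is_torsion_def by blast
qed

lemma is_torsion_zscale_cancel:
  assumes "is_torsion (zscale c x)" "c \<noteq> 0"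
  shows "is_torsion x"
proof -
  obtain m where "m \<noteq> 0" "zscale m (zscale c x) = 0"
    using assms(1) by (auto simp: is_torsion_def)
  then have "zscale (m * c) x = 0" "m * c \<noteq> 0"
    using assms(2) by (simp_all add: zscale_mult)
  then show ?thesis
    unfolding is_torsion_def by blast
qed

subsection \<open>Polynomials acting through an endomorphism\<close>

lemma endo_zero: "is_endo f \<Longrightarrow> f 0 = 0"
  unfolding is_endo_def by (metis add_cancel_right_right)

lemma endo_minus: "is_endo f \<Longrightarrow> f (- x) = - f x"
  by (metis add.right_inverse endo_zero is_endo_def minus_unique)

lemma endo_sum: "is_endo f \<Longrightarrow> f (sum g A) = (\<Sum>i\<in>A. f (g i))"
  by (induction A rule: infinite_finite_induct) (auto simp: endo_zero is_endo_def)

lemma endo_nscale: "is_endo f \<Longrightarrow> f (nscale n x) = nscale n (f x)"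
  by (induction n) (auto simp: endo_zero is_endo_def)

lemma endo_zscale: "is_endo f \<Longrightarrow> f (zscale k x) = zscale k (f x)"
  by (simp add: zscale_def endo_nscale endo_minus)

lemma endo_funpow: "is_endo f \<Longrightarrow> is_endo (f ^^ n)"
  by (induction n) (auto simp: is_endo_def)

lemma subgroup_zscale:
  assumes "is_subgroup X" "x \<in> X"
  shows "zscale k x \<in> X"
proof -
  have "nscale n x \<in> X" for n
    using assms by (induction n) (auto simp: is_subgroup_def)
  then show ?thesis
    using assms(1) by (auto simp: zscale_def is_subgroup_def)
qed

lemma subgroup_sum:
  assumes "is_subgroup X" "\<And>i. i \<in> A \<Longrightarrow> g i \<in> X"
  shows "sum g A \<in> X"
  using assms(2) by (induction A rule: infinite_finite_induct) (use assms(1) in \<open>auto simp: is_subgroup_def\<close>)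

definition poly_act :: "('a::ab_group_add \<Rightarrow> 'a) \<Rightarrow> 'a \<Rightarrow> int poly \<Rightarrow> 'a" where
  "poly_act f t q = (\<Sum>i\<le>degree q. zscale (coeff q i) ((f ^^ i) t))"

lemma poly_act_bound:
  "degree q \<le> N \<Longrightarrow> poly_act f t q = (\<Sum>i\<le>N. zscale (coeff q i) ((f ^^ i) t))"
  unfolding poly_act_def by (rule sum.mono_neutral_left) (auto simp: coeff_eq_0)

lemma poly_act_0 [simp]: "poly_act f t 0 = 0"
  by (simp add: poly_act_def)

lemma poly_act_1 [simp]: "poly_act f t 1 = t"
  by (simp add: poly_act_def)

lemma poly_act_add: "poly_act f t (p + q) = poly_act f t p + poly_act f t q"
proof -
  let ?N = "max (degree p) (degree q)"
  have "poly_act f t (p + q) = (\<Sum>i\<le>?N. zscale (coeff (p + q) i) ((f ^^ i) t))"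
    by (rule poly_act_bound) (simp add: degree_add_le)
  also have "\<dots> = (\<Sum>i\<le>?N. zscale (coeff p i) ((f ^^ i) t)) + (\<Sum>i\<le>?N. zscale (coeff q i) ((f ^^ i) t))"
    by (simp add: zscale_add_left sum.distrib)
  also have "\<dots> = poly_act f t p + poly_act f t q"
    by (simp add: poly_act_bound[symmetric])
  finally show ?thesis .
qed

lemma poly_act_minus: "poly_act f t (- q) = - poly_act f t q"
  by (metis add.right_inverse minus_unique poly_act_0 poly_act_add)

lemma poly_act_diff: "poly_act f t (p - q) = poly_act f t p - poly_act f t q"
  using poly_act_add[of f t p "- q"] poly_act_minus[of f t q] by simp

lemma poly_act_sum: "poly_act f t (sum g A) = (\<Sum>i\<in>A. poly_act f t (g i))"
  by (induction A rule: infinite_finite_induct) (auto simp: poly_act_add)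

lemma poly_act_smult: "poly_act f t (smult c q) = zscale c (poly_act f t q)"
proof -
  have "poly_act f t (smult c q) = (\<Sum>i\<le>degree q. zscale (coeff (smult c q) i) ((f ^^ i) t))"
    by (rule poly_act_bound) (simp add: degree_smult_le)
  then show ?thesis by (simp add: zscale_mult zscale_sum_right poly_act_def)
qed

lemma poly_act_pCons: "poly_act f t (pCons c q) = zscale c t + poly_act f (f t) q"
proof -
  have "poly_act f t (pCons c q) = (\<Sum>i\<le>Suc (degree q). zscale (coeff (pCons c q) i) ((f ^^ i) t))"
    by (rule poly_act_bound) (simp add: degree_pCons_le)
  also have "\<dots> = zscale c t + (\<Sum>i\<le>degree q. zscale (coeff q i) ((f ^^ Suc i) t))"
    by (subst sum.atMost_Suc_shift) simp
  also have "\<dots> = zscale c t + poly_act f (f t) q"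
    by (simp add: poly_act_def funpow_Suc_right del: funpow.simps)
  finally show ?thesis .
qed

context
  fixes f :: "'a::ab_group_add \<Rightarrow> 'a"
  assumes endo: "is_endo f"
begin

lemma endo_poly_act: "f (poly_act f t q) = poly_act f (f t) q"
  unfolding poly_act_def by (simp add: endo endo_sum endo_zscale funpow_swap1)

lemma poly_act_zscale_point: "poly_act f (zscale k s) q = zscale k (poly_act f s q)"
  unfolding poly_act_def using endo_funpow[OF endo]
  by (simp add: endo_zscale zscale_sum_right zscale_commute)

lemma poly_act_zero_point [simp]: "poly_act f 0 q = 0"
  unfolding poly_act_def using endo_funpow[OF endo] by (simp add: endo_zero)

lemma poly_act_pCons_0: "poly_act f t (pCons 0 q) = f (poly_act f t q)"
  by (simp add: poly_act_pCons endo_poly_act)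

lemma poly_act_mult: "poly_act f t (p * q) = poly_act f (poly_act f t p) q"
proof (induction q rule: pCons_induct)
  case (pCons c q)
  have "poly_act f t (p * pCons c q) = zscale c (poly_act f t p) + f (poly_act f t (p * q))"
    by (simp add: mult_pCons_right poly_act_add poly_act_smult poly_act_pCons_0)
  then show ?case
    using pCons by (simp add: poly_act_pCons endo_poly_act)
qed simp

lemma poly_act_monom: "poly_act f t (monom c k) = zscale c ((f ^^ k) t)"
proof (induction k)
  case 0
  then show ?case by (simp add: monom_0 poly_act_pCons)
next
  case (Suc k)
  then show ?case by (simp add: monom_Suc poly_act_pCons_0 endo_zscale endo)
qed

lemma is_torsion_poly_act:
  assumes "is_torsion x"
  shows "is_torsion (poly_act f x q)"
proof -
  obtain m where "m \<noteq> 0" "zscale m x = 0"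
    using assms by (auto simp: is_torsion_def)
  then have "zscale m (poly_act f x q) = 0"
    by (simp flip: poly_act_zscale_point)
  then show ?thesis
    unfolding is_torsion_def using \<open>m \<noteq> 0\<close> by blast
qed

lemma range_poly_act_subset:
  assumes "is_subgroup S" "f ` S \<subseteq> S" "t \<in> S"
  shows "range (poly_act f t) \<subseteq> S"
proof -
  have "(f ^^ i) t \<in> S" for i
    using assms(2,3) by (induction i) auto
  then show ?thesis
    unfolding poly_act_def using assms(1) by (auto intro!: subgroup_sum subgroup_zscale)
qed

lemma subgroup_range_poly_act: "is_subgroup (range (poly_act f t))"
  unfolding is_subgroup_def
  by (auto simp: image_iff) (metis poly_act_0, metis poly_act_add, metis poly_act_minus)

lemma Zphi_eq_range_poly_act: "Zphi f t = range (poly_act f t)"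
proof
  have "f ` range (poly_act f t) \<subseteq> range (poly_act f t)"
    by (auto simp: poly_act_pCons_0[symmetric])
  moreover have "t \<in> range (poly_act f t)"
    by (metis poly_act_1 rangeI)
  ultimately show "Zphi f t \<subseteq> range (poly_act f t)"
    unfolding Zphi_def using subgroup_range_poly_act by blast
  show "range (poly_act f t) \<subseteq> Zphi f t"
    unfolding Zphi_def using range_poly_act_subset by blast
qed

end

subsection \<open>Relations from inertia\<close>

lemma finite_quot_pigeonhole:
  fixes y :: "nat \<Rightarrow> 'a::ab_group_add"
  assumes "finite_quot Y X" "0 \<in> X" "\<And>j. y j \<in> Y"
  obtains j j' where "j \<noteq> j'" "y j - y j' \<in> X"
proof -
  let ?coset = "\<lambda>j. (\<lambda>x. y j + x) ` X"
  have "range ?coset \<subseteq> (\<lambda>y. (\<lambda>x. y + x) ` X) ` Y"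
    using assms(3) by auto
  then have "finite (range ?coset)"
    using assms(1) finite_subset unfolding finite_quot_def by blast
  then have "\<not> inj ?coset"
    using finite_imageD infinite_UNIV_nat by blast
  then obtain j j' where "j \<noteq> j'" "?coset j = ?coset j'"
    unfolding inj_def by blast
  moreover have "y j \<in> ?coset j"
    using assms(2) by force
  ultimately obtain x where "x \<in> X" "y j = y j' + x"
    by auto
  then show ?thesis
    using that \<open>j \<noteq> j'\<close> by (simp add: algebra_simps)
qed

text \<open>Its elements have vanishing odd-indexed coefficients, so a difference of two odd iterates
  (or of two even iterates, after one application of \<open>f\<close>) cannot cancel against it.\<close>
definition even_span :: "('a::ab_group_add \<Rightarrow> 'a) \<Rightarrow> 'a \<Rightarrow> 'a set" where
  "even_span f t = poly_act f t ` {q. \<forall>i. odd i \<longrightarrow> coeff q i = 0}"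

lemma subgroup_even_span: "is_subgroup (even_span f t)"
  unfolding is_subgroup_def even_span_def
proof (intro conjI ballI)
  show "0 \<in> poly_act f t ` {q. \<forall>i. odd i \<longrightarrow> coeff q i = 0}"
    by (rule image_eqI[of _ _ 0]) auto
next
  fix x y assume "x \<in> poly_act f t ` {q. \<forall>i. odd i \<longrightarrow> coeff q i = 0}"
    "y \<in> poly_act f t ` {q. \<forall>i. odd i \<longrightarrow> coeff q i = 0}"
  then obtain p q where "\<forall>i. odd i \<longrightarrow> coeff p i = 0" "\<forall>i. odd i \<longrightarrow> coeff q i = 0"
    "x = poly_act f t p" "y = poly_act f t q" by blast
  then show "x + y \<in> poly_act f t ` {q. \<forall>i. odd i \<longrightarrow> coeff q i = 0}"
    by (intro image_eqI[of _ _ "p + q"]) (auto simp: poly_act_add)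
next
  fix x assume "x \<in> poly_act f t ` {q. \<forall>i. odd i \<longrightarrow> coeff q i = 0}"
  then obtain q where "\<forall>i. odd i \<longrightarrow> coeff q i = 0" "x = poly_act f t q" by blast
  then show "- x \<in> poly_act f t ` {q. \<forall>i. odd i \<longrightarrow> coeff q i = 0}"
    by (intro image_eqI[of _ _ "- q"]) (auto simp: poly_act_minus)
qed

context
  fixes f :: "'a::ab_group_add \<Rightarrow> 'a"
  assumes endo: "is_endo f"
begin

lemma funpow_even_in_even_span: "(f ^^ (2 * j)) t \<in> even_span f t"
proof -
  have "(f ^^ (2 * j)) t = poly_act f t (monom 1 (2 * j))"
    by (simp add: poly_act_monom endo)
  then show ?thesis
    unfolding even_span_def by (auto simp: coeff_monom)
qed

lemma inertial_relation:
  assumes "inertial f"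
  shows "\<exists>Q i. coeff Q i = 1 \<and> poly_act f t Q = 0"
proof -
  let ?X = "even_span f t"
  have "0 \<in> ?X"
    using subgroup_even_span by (auto simp: is_subgroup_def)
  have odd_mem: "(f ^^ (2 * j + 1)) t \<in> sum_set (f ` ?X) ?X" for j
    using funpow_even_in_even_span[of j t] \<open>0 \<in> ?X\<close> unfolding sum_set_def by force
  have "finite_quot (sum_set (f ` ?X) ?X) ?X"
    using assms subgroup_even_span unfolding inertial_def by blast
  then obtain j j' where
    "j \<noteq> j'" "(f ^^ (2 * j + 1)) t - (f ^^ (2 * j' + 1)) t \<in> ?X"
    using finite_quot_pigeonhole[of _ ?X "\<lambda>j. (f ^^ (2 * j + 1)) t"] \<open>0 \<in> ?X\<close> odd_mem
    by blast
  then obtain r where r: "\<forall>i. odd i \<longrightarrow> coeff r i = 0"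
    "(f ^^ (2 * j + 1)) t - (f ^^ (2 * j' + 1)) t = poly_act f t r"
    unfolding even_span_def by blast
  define Q where "Q = monom 1 (2 * j + 1) - monom 1 (2 * j' + 1) - r"
  have "coeff Q (2 * j + 1) = 1"
    using r(1) \<open>j \<noteq> j'\<close> by (simp add: Q_def coeff_monom)
  moreover have "poly_act f t Q = 0"
    using r(2) by (simp add: Q_def poly_act_diff poly_act_monom endo)
  ultimately show ?thesis by blast
qed

lemma left_inertial_relation:
  assumes "left_inertial f"
  shows "\<exists>Q i. coeff Q i = 1 \<and> poly_act f t Q = 0"
proof -
  let ?X = "even_span f t"
  have "0 \<in> ?X \<inter> f ` ?X"
    using subgroup_even_span endo_zero[OF endo] by (force simp: is_subgroup_def)
  moreover have "finite_quot ?X (?X \<inter> f ` ?X)"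
    using assms subgroup_even_span unfolding left_inertial_def by blast
  ultimately obtain j j' where
    "j \<noteq> j'" "(f ^^ (2 * j)) t - (f ^^ (2 * j')) t \<in> ?X \<inter> f ` ?X"
    using finite_quot_pigeonhole[of ?X _ "\<lambda>j. (f ^^ (2 * j)) t"] funpow_even_in_even_span
    by blast
  then obtain r where r: "\<forall>i. odd i \<longrightarrow> coeff r i = 0"
    "(f ^^ (2 * j)) t - (f ^^ (2 * j')) t = poly_act f t (pCons 0 r)"
    unfolding even_span_def by (auto simp: poly_act_pCons_0 endo)
  define Q where "Q = monom 1 (2 * j) - monom 1 (2 * j') - pCons 0 r"
  have "coeff (pCons 0 r) (2 * j) = 0"
    using r(1) by (cases j) (auto simp: coeff_pCons)
  then have "coeff Q (2 * j) = 1"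
    using \<open>j \<noteq> j'\<close> by (simp add: Q_def coeff_monom)
  moreover have "poly_act f t Q = 0"
    using r(2) by (simp add: Q_def poly_act_diff poly_act_monom endo)
  ultimately show ?thesis by blast
qed

end

subsection \<open>Finiteness of \<open>\<int>[f]t\<close> for torsion \<open>t\<close>\<close>

definition trunc_span :: "('a::ab_group_add \<Rightarrow> 'a) \<Rightarrow> 'a \<Rightarrow> nat \<Rightarrow> 'a set \<Rightarrow> 'a set" where
  "trunc_span f t M K = {(\<Sum>i<M. zscale (c i) ((f ^^ i) t)) + k | c k. k \<in> K}"

lemma trunc_spanI: "k \<in> K \<Longrightarrow> (\<Sum>i<M. zscale (c i) ((f ^^ i) t)) + k \<in> trunc_span f t M K"
  unfolding trunc_span_def by blast

lemma trunc_spanE: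
  assumes "x \<in> trunc_span f t M K"
  obtains c k where "k \<in> K" "x = (\<Sum>i<M. zscale (c i) ((f ^^ i) t)) + k"
  using assms unfolding trunc_span_def by blast

lemma subgroup_trunc_span:
  assumes "is_subgroup K"
  shows "is_subgroup (trunc_span f t M K)"
  unfolding is_subgroup_def
proof (intro conjI ballI)
  show "0 \<in> trunc_span f t M K"
    using assms trunc_spanI[where k = 0 and K = K and c = "\<lambda>_. 0" and M = M] by (simp add: is_subgroup_def)
next
  fix x y assume "x \<in> trunc_span f t M K" "y \<in> trunc_span f t M K"
  obtain c k where x: "k \<in> K" "x = (\<Sum>i<M. zscale (c i) ((f ^^ i) t)) + k"
    using \<open>x \<in> _\<close> by (rule trunc_spanE)
  obtain c' k' where y: "k' \<in> K" "y = (\<Sum>i<M. zscale (c' i) ((f ^^ i) t)) + k'"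
    using \<open>y \<in> _\<close> by (rule trunc_spanE)
  from x y have "x + y = (\<Sum>i<M. zscale (c i + c' i) ((f ^^ i) t)) + (k + k')" "k + k' \<in> K"
    using assms by (simp_all add: zscale_add_left sum.distrib is_subgroup_def)
  then show "x + y \<in> trunc_span f t M K"
    by (metis trunc_spanI)
next
  fix x assume "x \<in> trunc_span f t M K"
  then obtain c k where "k \<in> K" "x = (\<Sum>i<M. zscale (c i) ((f ^^ i) t)) + k"
    by (rule trunc_spanE)
  then have "- x = (\<Sum>i<M. zscale (- c i) ((f ^^ i) t)) + (- k)" "- k \<in> K"
    using assms by (simp_all add: zscale_minus_left sum_negf is_subgroup_def)
  then show "- x \<in> trunc_span f t M K"
    by (metis trunc_spanI)
qed

lemma subset_trunc_span: "K \<subseteq> trunc_span f t M K"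
  using trunc_spanI[where c = "\<lambda>_. 0" and M = M] by fastforce

lemma funpow_in_trunc_span:
  assumes "0 \<in> K" "i < M"
  shows "(f ^^ i) t \<in> trunc_span f t M K"
proof -
  have "(\<Sum>j<M. zscale (if j = i then 1 else 0) ((f ^^ j) t)) = (\<Sum>j<M. if j = i then (f ^^ j) t else 0)"
    by (rule sum.cong) auto
  also have "\<dots> = (f ^^ i) t"
    using assms(2) by (simp add: sum.delta)
  finally have "(f ^^ i) t = (\<Sum>j<M. zscale (if j = i then 1 else 0) ((f ^^ j) t)) + 0"
    by simp
  then show ?thesis
    by (simp only:) (rule trunc_spanI[OF assms(1)])
qed

context
  fixes f :: "'a::ab_group_add \<Rightarrow> 'a"
  assumes endo: "is_endo f"
begin

lemma endo_image_trunc_span: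
  assumes K: "is_subgroup K" "f ` K \<subseteq> K" and top: "(f ^^ M) t \<in> trunc_span f t M K"
  shows "f ` trunc_span f t M K \<subseteq> trunc_span f t M K"
proof
  let ?S = "trunc_span f t M K"
  have S: "is_subgroup ?S"
    using K(1) by (rule subgroup_trunc_span)
  have shifted: "(f ^^ Suc i) t \<in> ?S" if "i < M" for i
    using that top funpow_in_trunc_span[of K "Suc i" M] K(1)
    by (cases "Suc i = M") (auto simp: is_subgroup_def)
  fix y assume "y \<in> f ` ?S"
  then obtain c k where "k \<in> K" "y = f ((\<Sum>i<M. zscale (c i) ((f ^^ i) t)) + k)"
    by (auto elim: trunc_spanE)
  then have y: "y = (\<Sum>i<M. zscale (c i) ((f ^^ Suc i) t)) + f k"
    using endo by (simp add: is_endo_def endo_sum endo_zscale)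
  have "(\<Sum>i<M. zscale (c i) ((f ^^ Suc i) t)) \<in> ?S"
    using S shifted by (auto intro!: subgroup_sum subgroup_zscale)
  moreover have "f k \<in> ?S"
    using \<open>k \<in> K\<close> K(2) subset_trunc_span by blast
  ultimately show "y \<in> ?S"
    unfolding y using S by (simp add: is_subgroup_def)
qed

lemma range_poly_act_subset_trunc_span:
  assumes K: "is_subgroup K" "f ` K \<subseteq> K" and top: "(f ^^ M) t \<in> trunc_span f t M K"
  shows "range (poly_act f t) \<subseteq> trunc_span f t M K"
proof (rule range_poly_act_subset[OF endo subgroup_trunc_span[OF K(1)]])
  show "f ` trunc_span f t M K \<subseteq> trunc_span f t M K"
    using K top by (rule endo_image_trunc_span)
  show "t \<in> trunc_span f t M K"
    using top funpow_in_trunc_span[of K 0 M] K(1)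
    by (cases M) (auto simp: is_subgroup_def)
qed

lemma finite_trunc_span:
  assumes "finite K" "n > 0" "zscale (int n) t = 0"
  shows "finite (trunc_span f t M K)"
proof -
  define C where "C = PiE {..<M} (\<lambda>_. {0..<int n})"
  define G where "G = (\<lambda>(c, k). (\<Sum>i<M. zscale (c i) ((f ^^ i) t)) + k)"
  have torsion: "zscale (int n) ((f ^^ i) t) = 0" for i
    using assms(3) endo_funpow[OF endo, of i] by (simp add: endo_zscale[symmetric] endo_zero)
  have "trunc_span f t M K \<subseteq> G ` (C \<times> K)"
  proof
    fix y assume "y \<in> trunc_span f t M K"
    then obtain c k where y: "k \<in> K" "y = (\<Sum>i<M. zscale (c i) ((f ^^ i) t)) + k"
      by (rule trunc_spanE)
    define c' where "c' = (\<lambda>i. if i \<in> {..<M} then c i mod int n else undefined)"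
    have "c' \<in> C"
      unfolding C_def c'_def by (rule PiE_I) (use \<open>n > 0\<close> in auto)
    moreover have "(\<Sum>i<M. zscale (c' i) ((f ^^ i) t)) = (\<Sum>i<M. zscale (c i) ((f ^^ i) t))"
      by (rule sum.cong) (simp_all add: c'_def zscale_mod[OF torsion])
    ultimately show "y \<in> G ` (C \<times> K)"
      using y by (intro image_eqI[of _ _ "(c', k)"]) (simp_all add: G_def)
  qed
  moreover have "finite (C \<times> K)"
    using assms(1) by (simp add: C_def finite_PiE)
  ultimately show ?thesis
    by (meson finite_imageI finite_subset)
qed

text \<open>Modulo \<open>p\<close>, the relation \<open>Q\<close> expresses \<open>f\<^sup>M t\<close> through the lower iterates.\<close>
lemma top_funpow_in_trunc_span:
  assumes rel: "poly_act f t Q = 0" and high: "\<forall>i>M. p dvd coeff Q i"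
    and coprime: "coprime p (coeff Q M)"
  shows "(f ^^ M) t \<in> trunc_span f t M (range (poly_act f (zscale p t)))"
proof -
  let ?K = "range (poly_act f (zscale p t))" and ?x = "\<lambda>i. (f ^^ i) t" and ?q = "coeff Q"
  let ?S = "trunc_span f t M ?K"
  have S: "is_subgroup ?S"
    by (intro subgroup_trunc_span subgroup_range_poly_act endo)
  define D where "D = max M (degree Q)"
  define H where "H = (\<Sum>i\<in>{M<..D}. monom (?q i div p) i)"
  have "0 = (\<Sum>i\<le>D. zscale (?q i) (?x i))"
    using rel poly_act_bound[of Q D f t] by (simp add: D_def)
  also have "{..D} = insert M ({..<M} \<union> {M<..D})"
    by (auto simp: D_def)
  also have "(\<Sum>i\<in>insert M ({..<M} \<union> {M<..D}). zscale (?q i) (?x i))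
      = zscale (?q M) (?x M) + ((\<Sum>i<M. zscale (?q i) (?x i)) + (\<Sum>i\<in>{M<..D}. zscale (?q i) (?x i)))"
  proof -
    have "{..<M} \<inter> {M<..D} = {}"
      by auto
    then show ?thesis
      by (simp add: sum.union_disjoint)
  qed
  also have "(\<Sum>i\<in>{M<..D}. zscale (?q i) (?x i)) = poly_act f (zscale p t) H"
    unfolding H_def poly_act_sum
  proof (rule sum.cong)
    fix i assume "i \<in> {M<..D}"
    then have "?q i div p * p = ?q i"
      using high by simp
    then show "zscale (?q i) (?x i) = poly_act f (zscale p t) (monom (?q i div p) i)"
      by (simp add: poly_act_monom endo endo_zscale[OF endo_funpow[OF endo]] zscale_mult[symmetric])
  qed simp
  finally have qM_eq: "zscale (?q M) (?x M) = - ((\<Sum>i<M. zscale (?q i) (?x i)) + poly_act f (zscale p t) H)"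
    by (simp add: eq_neg_iff_add_eq_0 algebra_simps)
  have "(\<Sum>i<M. zscale (?q i) (?x i)) + poly_act f (zscale p t) H \<in> ?S"
    by (rule trunc_spanI) simp
  then have qM: "zscale (?q M) (?x M) \<in> ?S"
    using S unfolding qM_eq is_subgroup_def by blast
  have "zscale p (?x M) = poly_act f (zscale p t) (monom 1 M)"
    by (simp add: poly_act_monom endo endo_zscale[OF endo_funpow[OF endo]])
  then have pM: "zscale p (?x M) \<in> ?S"
    using subset_trunc_span by blast
  obtain u v where "u * ?q M + v * p = 1"
    using coprime bezout_int[of "?q M" p] by (metis coprime_imp_gcd_eq_1 gcd.commute)
  then have "?x M = zscale u (zscale (?q M) (?x M)) + zscale v (zscale p (?x M))"
    by (metis zscale_add_left zscale_mult zscale_one)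
  moreover have "zscale u (zscale (?q M) (?x M)) + zscale v (zscale p (?x M)) \<in> ?S"
    using S qM pM subgroup_zscale unfolding is_subgroup_def by blast
  ultimately show ?thesis
    by metis
qed

end

lemma last_coeff_not_dvd:
  fixes Q :: "'a::comm_semiring_1 poly"
  assumes "\<not> p dvd coeff Q i"
  obtains M where "\<not> p dvd coeff Q M" "\<forall>j>M. p dvd coeff Q j"
proof -
  let ?I = "{j. \<not> p dvd coeff Q j}"
  have "?I \<subseteq> {..degree Q}"
    by (auto intro: ccontr simp: coeff_eq_0)
  then have "finite ?I"
    by (rule finite_subset) simp
  moreover have "i \<in> ?I"
    using assms by simp
  ultimately have "Max ?I \<in> ?I" "\<And>j. j \<in> ?I \<Longrightarrow> j \<le> Max ?I"
    using Max_in[of ?I] Max_ge[of ?I] by auto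
  then have "\<not> p dvd coeff Q (Max ?I)" "\<forall>j>Max ?I. p dvd coeff Q j"
    by (auto dest: leD)
  then show ?thesis
    by (rule that)
qed

context
  fixes f :: "'a::ab_group_add \<Rightarrow> 'a"
  assumes endo: "is_endo f"
begin

lemma finite_range_poly_act_prime_step:
  assumes "prime p" "finite (range (poly_act f (zscale (int p) t)))"
    and "poly_act f t Q = 0" "\<not> int p dvd coeff Q i"
    and "n > 0" "zscale (int n) t = 0"
  shows "finite (range (poly_act f t))"
proof -
  obtain M where M: "\<not> int p dvd coeff Q M" "\<forall>j>M. int p dvd coeff Q j"
    using assms(4) by (rule last_coeff_not_dvd)
  have "coprime (int p) (coeff Q M)"
    using assms(1) M(1) by (simp add: prime_imp_coprime)
  then have top: "(f ^^ M) t \<in> trunc_span f t M (range (poly_act f (zscale (int p) t)))"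
    using top_funpow_in_trunc_span[OF endo assms(3) M(2)] by blast
  have "f ` range (poly_act f s) \<subseteq> range (poly_act f s)" for s
    by (auto simp: poly_act_pCons_0[OF endo, symmetric])
  then have "range (poly_act f t) \<subseteq> trunc_span f t M (range (poly_act f (zscale (int p) t)))"
    using range_poly_act_subset_trunc_span[OF endo subgroup_range_poly_act[OF endo] _ top] by blast
  moreover have "finite (trunc_span f t M (range (poly_act f (zscale (int p) t))))"
    using finite_trunc_span[OF endo assms(2,5,6)] .
  ultimately show ?thesis
    by (rule finite_subset)
qed

lemma finite_range_poly_act_if_torsion:
  assumes hyp: "inertial f \<or> left_inertial f" and "is_torsion t"
  shows "finite (range (poly_act f t))"
proof -
  obtain n where "n > 0" "zscale (int n) t = 0"
    using assms(2) by (rule is_torsion_nat)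
  then show ?thesis
  proof (induction n arbitrary: t rule: less_induct)
    case (less n)
    show ?case
    proof (cases "n = 1")
      case True
      then have "range (poly_act f t) = {0}"
        using less.prems by (auto simp: zscale_of_nat endo)
      then show ?thesis by simp
    next
      case False
      then obtain p where p: "prime p" "p dvd n"
        using prime_factor_nat by blast
      then obtain n' where n': "n = p * n'"
        by (elim dvdE)
      then have "n' > 0" "n' < n"
        using less.prems(1) prime_gt_1_nat[OF p(1)] by auto
      moreover have "zscale (int n') (zscale (int p) t) = 0"
        using less.prems(2) n' by (simp flip: zscale_mult add: mult.commute)
      ultimately have fin: "finite (range (poly_act f (zscale (int p) t)))"
        using less.IH by blast
      obtain Q i where Q: "coeff Q i = 1" "poly_act f t Q = 0"
        using hyp inertial_relation[OF endo] left_inertial_relation[OF endo] by blast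
      have "\<not> int p dvd coeff Q i"
        using Q(1) prime_gt_1_nat[OF p(1)] by simp
      then show ?thesis
        using finite_range_poly_act_prime_step[OF p(1) fin Q(2)] less.prems by blast
    qed
  qed
qed

end

subsection \<open>Saturated ideals of \<open>\<int>[x]\<close>\<close>

lemma primitive_dvd_smult_cancel:
  fixes g q :: "int poly"
  assumes "content g = 1" "g dvd smult k q" "k \<noteq> 0"
  shows "g dvd q"
proof -
  have "primitive_part g dvd primitive_part (smult k q)"
    using assms(2) by blast
  then have "g dvd smult (unit_factor k) (primitive_part q)"
    using assms(1) by (simp add: primitive_part_prim primitive_part_smult)
  moreover have "unit_factor k * unit_factor k = 1"
    using assms(3) by (simp add: unit_factor_int_def)
  ultimately have "g dvd primitive_part q"
    using dvd_smult[of g "smult (unit_factor k) (primitive_part q)" "unit_factor k"] by simp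
  also have "primitive_part q dvd q"
    using dvd_smult[of "primitive_part q" "primitive_part q" "content q"] by simp
  finally show ?thesis .
qed

text \<open>The generator is the primitive part of a nonzero element of least degree (Gauss' lemma).\<close>
lemma saturated_ideal_principal:
  fixes J :: "int poly set"
  assumes zero: "0 \<in> J"
    and diff: "\<And>p q. p \<in> J \<Longrightarrow> q \<in> J \<Longrightarrow> p - q \<in> J"
    and mult: "\<And>p q. p \<in> J \<Longrightarrow> p * q \<in> J"
    and saturated: "\<And>c p. smult c p \<in> J \<Longrightarrow> c \<noteq> 0 \<Longrightarrow> p \<in> J"
  obtains g where "g \<in> J" "\<And>q. q \<in> J \<Longrightarrow> g dvd q"
proof (cases "J \<subseteq> {0}")
  case True
  then show ?thesis
    using that[of 0] zero by auto
next
  case False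
  then obtain g1 where "g1 \<in> J" "g1 \<noteq> 0" by blast
  then obtain g where g: "g \<in> J" "g \<noteq> 0" and least: "\<And>h. h \<in> J \<Longrightarrow> h \<noteq> 0 \<Longrightarrow> degree g \<le> degree h"
    using ex_has_least_nat[of "\<lambda>h. h \<in> J \<and> h \<noteq> 0" g1 degree] by blast
  define g0 where "g0 = primitive_part g"
  have "g0 \<noteq> 0" "content g0 = 1" "degree g0 = degree g"
    using g(2) by (simp_all add: g0_def)
  have "g0 \<in> J"
    using saturated[of "content g" g0] g by (simp add: g0_def)
  have "g0 dvd q" if "q \<in> J" for q
  proof -
    obtain s r where sr: "pseudo_divmod q g0 = (s, r)"
      by (metis surj_pair)
    define k where "k = coeff g0 (degree g0) ^ (Suc (degree q) - degree g0)"
    have eq: "smult k q = g0 * s + r" and rdeg: "r = 0 \<or> degree r < degree g0"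
      using pseudo_divmod[OF \<open>g0 \<noteq> 0\<close> sr] by (auto simp: k_def)
    have "q * [:k:] - g0 * s \<in> J"
      using diff mult \<open>q \<in> J\<close> \<open>g0 \<in> J\<close> by blast
    moreover have "r = q * [:k:] - g0 * s"
      using eq by (simp add: mult.commute)
    ultimately have "r \<in> J"
      by simp
    then have "r = 0"
      using rdeg least \<open>degree g0 = degree g\<close> by fastforce
    then have "g0 dvd smult k q"
      using eq by simp
    moreover have "k \<noteq> 0"
      using \<open>g0 \<noteq> 0\<close> by (simp add: k_def)
    ultimately show ?thesis
      using primitive_dvd_smult_cancel \<open>content g0 = 1\<close> by blast
  qed
  then show ?thesis
    using that \<open>g0 \<in> J\<close> by blast
qed

theorem lemma4p3:
  fixes f :: "'a::ab_group_add \<Rightarrow> 'a" and a :: 'a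
  assumes "is_endo f"
    and "inertial f \<or> left_inertial f"
  shows "finite (torsion_part (Zphi f a))"
proof -
  define J where "J = {q. is_torsion (poly_act f a q)}"
  have J: "0 \<in> J" "\<And>p q. p \<in> J \<Longrightarrow> q \<in> J \<Longrightarrow> p - q \<in> J"
    "\<And>p q. p \<in> J \<Longrightarrow> p * q \<in> J" "\<And>c p. smult c p \<in> J \<Longrightarrow> c \<noteq> 0 \<Longrightarrow> p \<in> J"
    using assms(1)
    by (auto simp: J_def poly_act_diff poly_act_mult poly_act_smult
        intro: is_torsion_diff is_torsion_poly_act[OF assms(1)] is_torsion_zscale_cancel)
  obtain g where g: "g \<in> J" "\<And>q. q \<in> J \<Longrightarrow> g dvd q"
    by (rule saturated_ideal_principal[of J]) (use J in blast)+
  have "torsion_part (Zphi f a) \<subseteq> range (poly_act f (poly_act f a g))"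
  proof
    fix x assume "x \<in> torsion_part (Zphi f a)"
    then obtain q where "q \<in> J" "x = poly_act f a q"
      by (auto simp: torsion_part_eq Zphi_eq_range_poly_act[OF assms(1)] J_def)
    moreover obtain s where "q = g * s"
      using g(2)[OF \<open>q \<in> J\<close>] by (elim dvdE)
    ultimately show "x \<in> range (poly_act f (poly_act f a g))"
      by (simp add: poly_act_mult[OF assms(1)])
  qed
  moreover have "finite (range (poly_act f (poly_act f a g)))"
    using finite_range_poly_act_if_torsion[OF assms] g(1) by (simp add: J_def)
  ultimately show ?thesis
    by (rule finite_subset)
qed

end
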